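(* For every positive integer $k$, $$D_{\mathrm{sub}}[EFX_{id}(2,2k+1)] \;\ge\; D[LS(K(2k+1,k))],$$ where $D_{\mathrm{sub}}[EFX_{id}(2,2k+1)]$ denotes the deterministic value-query complexity of finding an EFX allocation for two players who share one identical valuation, with the valuation ranging only over submodular valuations on the goods $[2k+1]$.
   Context: Goods form a finite set $M$. A valuation is a function $v:2^M\to\mathbb{R}_{\ge 0}$ with $v(\emptyset)=0$ that is monotone: $v(S)\le v(T)$ whenever $S\subseteq T$. It is submodular if $v(S\cup\{x\})-v(S)\ge v(T\cup\{x\})-v(T)$ for all $S\subseteq T$ and $x\notin T$. An allocation to players $1,\dots,n$ is an ordered partition $(A_1,\dots,A_n)$ of $M$; parts may be empty. An allocation is EFX (envy-free up to any good) if for all players $i,j$ and every $g\in A_j$ we have $v_i(A_i)\ge v_i(A_j\setminus\{g\})$. The query problem for EFX is as follows. The algorithm knows $n$ and $M=[m]$, and may adaptively ask value queries: querying a set $S$ returns $v(S)$. It must output an EFX allocation. $D[EFX_{id}(n,m)]$ is the minimum, over deterministic algorithms, of the maximum, over valuations $v$ in the class considered, of the number of queries used. The subscript "sub" means the valuation is restricted to submodular valuations. Local Search on a finite undirected graph $G=(V,E)$ is as follows. An unknown function $f:V\to\mathbb{R}$ is accessed only through queries: querying $a\in V$ returns $f(a)$. The algorithm must output a local maximum, i.e. a vertex $a$ with $f(a)\ge f(b)$ for every edge $(a,b)\in E$. $D[LS(G)]$ is the minimum, over deterministic algorithms, of the maximum, over all $f$, of the number of queries used. The Kneser graph $K(n,k)$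 has as vertices the $k$-element subsets of $[n]$, with two vertices adjacent if and only if they are disjoint. *)

theory Defs
  imports Main "HOL-Library.Extended_Nat"
begin

text \<open>A deterministic adaptive algorithm that asks queries of type 'q, receives real
answers, and finally outputs something of type 'o, is a (possibly infinitely
branching) decision tree: either it stops with an output, or it asks a query and
continues depending on the answer.\<close>

datatype ('q, 'o) qtree = Output 'o | Ask 'q "real \<Rightarrow> ('q, 'o) qtree"

primrec qcost :: "('q, 'o) qtree \<Rightarrow> ('q \<Rightarrow> real) \<Rightarrow> nat" where
  "qcost (Output x) f = 0"
| "qcost (Ask q k) f = Suc (qcost (k (f q)) f)"

primrec qout :: "('q, 'o) qtree \<Rightarrow> ('q \<Rightarrow> real) \<Rightarrow> 'o" where
  "qout (Output x) f = x"
| "qout (Ask q k) f = qout (k (f q)) f"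

text \<open>Deterministic query complexity: minimum over algorithms that are correct on every
admissible oracle of the worst-case number of queries over admissible oracles
(infinity if no correct algorithm exists).\<close>

definition query_complexity ::
  "(('q \<Rightarrow> real) \<Rightarrow> bool) \<Rightarrow> (('q \<Rightarrow> real) \<Rightarrow> 'o \<Rightarrow> bool) \<Rightarrow> enat" where
  "query_complexity adm valid =
     (INF T \<in> {T. \<forall>f. adm f \<longrightarrow> valid f (qout T f)}.
        (SUP f \<in> {f. adm f}. enat (qcost T f)))"

definition goods :: "nat \<Rightarrow> nat set" where
  "goods m = {1..m}"

definition monotone_valuation :: "nat set \<Rightarrow> (nat set \<Rightarrow> real) \<Rightarrow> bool" where
  "monotone_valuation M v \<longleftrightarrow>
     v {} = 0 \<and> (\<forall>S. S \<subseteq> M \<longrightarrow> v S \<ge> 0) \<and>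
     (\<forall>S T. S \<subseteq> T \<and> T \<subseteq> M \<longrightarrow> v S \<le> v T)"

definition submodular :: "nat set \<Rightarrow> (nat set \<Rightarrow> real) \<Rightarrow> bool" where
  "submodular M v \<longleftrightarrow>
     (\<forall>S T x. S \<subseteq> T \<and> T \<subseteq> M \<and> x \<in> M \<and> x \<notin> T \<longrightarrow>
        v (S \<union> {x}) - v S \<ge> v (T \<union> {x}) - v T)"

text \<open>A valuation is a function on 2^M; as an oracle of type nat set => real we
normalise it to 0 outside subsets of M (such queries carry no information).\<close>

definition sub_valuation_oracle :: "nat \<Rightarrow> (nat set \<Rightarrow> real) \<Rightarrow> bool" where
  "sub_valuation_oracle m v \<longleftrightarrow>
     monotone_valuation (goods m) v \<and> submodular (goods m) v \<and>
     (\<forall>S. \<not> S \<subseteq> goods m \<longrightarrow> v S = 0)"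

definition is_allocation :: "nat \<Rightarrow> nat set \<Rightarrow> (nat \<Rightarrow> nat set) \<Rightarrow> bool" where
  "is_allocation n M A \<longleftrightarrow>
     (\<Union>i\<in>{1..n}. A i) = M \<and>
     (\<forall>i\<in>{1..n}. \<forall>j\<in>{1..n}. i \<noteq> j \<longrightarrow> A i \<inter> A j = {})"

definition EFX_id :: "nat \<Rightarrow> (nat set \<Rightarrow> real) \<Rightarrow> (nat \<Rightarrow> nat set) \<Rightarrow> bool" where
  "EFX_id n v A \<longleftrightarrow>
     (\<forall>i\<in>{1..n}. \<forall>j\<in>{1..n}. \<forall>g\<in>A j. v (A i) \<ge> v (A j - {g}))"

definition D_sub_EFX_id :: "nat \<Rightarrow> nat \<Rightarrow> enat" where
  "D_sub_EFX_id n m =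
     query_complexity (sub_valuation_oracle m)
       (\<lambda>v A. is_allocation n (goods m) A \<and> EFX_id n v A)"

text \<open>Graph given by vertex set V and symmetric edge relation E. The unknown function
f : V => real is an oracle normalised to 0 outside V.\<close>

definition is_local_max :: "'a set \<Rightarrow> ('a \<Rightarrow> 'a \<Rightarrow> bool) \<Rightarrow> ('a \<Rightarrow> real) \<Rightarrow> 'a \<Rightarrow> bool" where
  "is_local_max V E f a \<longleftrightarrow> a \<in> V \<and> (\<forall>b\<in>V. E a b \<longrightarrow> f a \<ge> f b)"

definition D_LS :: "'a set \<Rightarrow> ('a \<Rightarrow> 'a \<Rightarrow> bool) \<Rightarrow> enat" where
  "D_LS V E =
     query_complexity (\<lambda>f. \<forall>a. a \<notin> V \<longrightarrow> f a = 0) (\<lambda>f a. is_local_max V E f a)"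

definition kneser_vertices :: "nat \<Rightarrow> nat \<Rightarrow> nat set set" where
  "kneser_vertices n k = {S. S \<subseteq> {1..n} \<and> card S = k}"

definition kneser_adj :: "nat set \<Rightarrow> nat set \<Rightarrow> bool" where
  "kneser_adj S T \<longleftrightarrow> S \<inter> T = {}"

end

theory Submission
  imports Defs Complex_Main
begin

text \<open>Given an oracle f on the k-subsets of [2k+1], take the identical valuation
v(S) = \<phi>(|S|) + [|S| = k] arctan(f S)/4 on m = 2k+1 goods, where \<phi> = card_profile m is
concave with marginal values 2m, 2m - 2, ..., 2. The perturbation is at most 1/2, so v is
still submodular and strictly increasing in |S|. Hence an EFX allocation splits the goods
into a k-set P and its complement Q, and EFX for the owner of P says v(P) \<ge> v(Q - {g}) for
every g in Q; the sets Q - {g} are exactly the Kneser neighbours of P, so P is a local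
maximum of f. An EFX algorithm run on v is simulated by a local search algorithm that pays
one query per k-set it asks about and answers every other query itself.\<close>

text \<open>A query translation tr answers a query q either by a constant (tr q = Inl a) or by
asking the oracle p and transforming its reply with h (tr q = Inr (p, h)).\<close>

primrec simulate ::
  "('q \<Rightarrow> real + ('p \<times> (real \<Rightarrow> real))) \<Rightarrow> ('o \<Rightarrow> 'u) \<Rightarrow> ('q, 'o) qtree \<Rightarrow> ('p, 'u) qtree" where
  "simulate tr out (Output x) = Output (out x)"
| "simulate tr out (Ask q c) =
     (case tr q of
        Inl a \<Rightarrow> simulate tr out (c a)
      | Inr (p, h) \<Rightarrow> Ask p (\<lambda>r. simulate tr out (c (h r))))"

definition translated_oracle ::
  "('q \<Rightarrow> real + ('p \<times> (real \<Rightarrow> real))) \<Rightarrow> ('p \<Rightarrow> real) \<Rightarrow> 'q \<Rightarrow> real" where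
  "translated_oracle tr f q = (case tr q of Inl a \<Rightarrow> a | Inr (p, h) \<Rightarrow> h (f p))"

lemma qout_simulate: "qout (simulate tr out T) f = out (qout T (translated_oracle tr f))"
  by (induction T) (auto simp: translated_oracle_def split: sum.split)

lemma qcost_simulate_le: "qcost (simulate tr out T) f \<le> qcost T (translated_oracle tr f)"
  by (induction T) (auto simp: translated_oracle_def le_SucI split: sum.split)

lemma query_complexity_reduction:
  assumes adm: "\<And>f. adm' f \<Longrightarrow> adm (translated_oracle tr f)"
    and valid: "\<And>f x. adm' f \<Longrightarrow> valid (translated_oracle tr f) x \<Longrightarrow> valid' f (out x)"
  shows "query_complexity adm' valid' \<le> query_complexity adm valid"
  unfolding query_complexity_def
proof (rule INF_greatest)
  let ?D' = "INF T \<in> {T. \<forall>f. adm' f \<longrightarrow> valid' f (qout T f)}. SUP f \<in> {f. adm' f}. enat (qcost T f)"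
  fix T assume "T \<in> {T. \<forall>g. adm g \<longrightarrow> valid g (qout T g)}"
  then have "simulate tr out T \<in> {T. \<forall>f. adm' f \<longrightarrow> valid' f (qout T f)}"
    using adm valid by (simp add: qout_simulate)
  then have "?D' \<le> (SUP f \<in> {f. adm' f}. enat (qcost (simulate tr out T) f))"
    by (rule INF_lower)
  also have "\<dots> \<le> (SUP g \<in> {g. adm g}. enat (qcost T g))"
  proof (rule SUP_least)
    fix f assume "f \<in> {f. adm' f}"
    have "enat (qcost (simulate tr out T) f) \<le> enat (qcost T (translated_oracle tr f))"
      by (simp add: qcost_simulate_le)
    also have "\<dots> \<le> (SUP g \<in> {g. adm g}. enat (qcost T g))"
      using adm \<open>f \<in> {f. adm' f}\<close> by (intro SUP_upper) simp
    finally show "enat (qcost (simulate tr out T) f) \<le> (SUP g \<in> {g. adm g}. enat (qcost T g))" .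
  qed
  finally show "?D' \<le> (SUP g \<in> {g. adm g}. enat (qcost T g))" .
qed

definition card_profile :: "nat \<Rightarrow> nat \<Rightarrow> real" where
  "card_profile m s = real s * (2 * real m + 1) - real s ^ 2"

lemma card_profile_0 [simp]: "card_profile m 0 = 0"
  by (simp add: card_profile_def)

lemma card_profile_Suc: "card_profile m (Suc s) - card_profile m s = 2 * real m - 2 * real s"
  by (simp add: card_profile_def algebra_simps power2_eq_square)

lemma card_profile_gap:
  assumes "p < q" "q \<le> m"
  shows "card_profile m p + 2 \<le> card_profile m q"
proof -
  have "card_profile m q - card_profile m p = (real q - real p) * (2 * real m + 1 - real q - real p)"
    by (simp add: card_profile_def algebra_simps power2_eq_square)
  moreover have "1 * 2 \<le> (real q - real p) * (2 * real m + 1 - real q - real p)"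
    using assms by (intro mult_mono) auto
  ultimately show ?thesis by simp
qed

lemma finite_goods [simp]: "finite (goods m)"
  by (simp add: goods_def)

lemma card_goods [simp]: "card (goods m) = m"
  by (simp add: goods_def)

lemma card_le_of_subset_goods: "S \<subseteq> goods m \<Longrightarrow> card S \<le> m"
  using card_mono[of "goods m" S] by simp

definition perturbed_valuation :: "nat \<Rightarrow> (nat set \<Rightarrow> real) \<Rightarrow> nat set \<Rightarrow> real" where
  "perturbed_valuation m e S = (if S \<subseteq> goods m then card_profile m (card S) + e S else 0)"

lemma perturbed_valuation_less:
  assumes "\<And>S. \<bar>e S\<bar> \<le> 1/2" and "S \<subseteq> goods m" "T \<subseteq> goods m" "card S < card T"
  shows "perturbed_valuation m e S < perturbed_valuation m e T"
proof -
  have "card_profile m (card S) + 2 \<le> card_profile m (card T)"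
    using assms(3,4) card_le_of_subset_goods by (intro card_profile_gap) auto
  then show ?thesis
    using assms(1)[of S] assms(1)[of T] assms(2,3) by (simp add: perturbed_valuation_def abs_le_iff)
qed

lemma perturbed_valuation_insert:
  assumes "S \<subseteq> goods m" "x \<in> goods m" "x \<notin> S"
  shows "perturbed_valuation m e (insert x S) - perturbed_valuation m e S
       = 2 * real m - 2 * real (card S) + e (insert x S) - e S"
proof -
  have "card (insert x S) = Suc (card S)"
    using assms finite_subset[OF assms(1)] by simp
  then have "perturbed_valuation m e (insert x S) = card_profile m (Suc (card S)) + e (insert x S)"
    using assms by (simp add: perturbed_valuation_def)
  moreover have "perturbed_valuation m e S = card_profile m (card S) + e S"
    using assms by (simp add: perturbed_valuation_def)
  ultimately show ?thesis
    using card_profile_Suc[of m "card S"] by linarith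
qed

lemma sub_valuation_oracle_perturbed_valuation:
  assumes small: "\<And>S. \<bar>e S\<bar> \<le> 1/2" and "e {} = 0"
  shows "sub_valuation_oracle m (perturbed_valuation m e)"
proof -
  let ?v = "perturbed_valuation m e"
  have card_less: "card S < card T" if "S \<subset> T" "T \<subseteq> goods m" for S T
    using that finite_subset[OF that(2)] by (simp add: psubset_card_mono)
  have mono: "?v S \<le> ?v T" if "S \<subseteq> T" "T \<subseteq> goods m" for S T
  proof (cases "S = T")
    case False
    then have "?v S < ?v T"
      using that card_less[of S T] by (intro perturbed_valuation_less small) auto
    then show ?thesis by simp
  qed simp
  have empty: "?v {} = 0"
    using \<open>e {} = 0\<close> by (simp add: perturbed_valuation_def)
  have "?v (insert x T) - ?v T \<le> ?v (insert x S) - ?v S"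
    if "S \<subset> T" "T \<subseteq> goods m" "x \<in> goods m" "x \<notin> T" for S T x
  proof -
    have "S \<subseteq> goods m" "x \<notin> S" "real (card S) + 1 \<le> real (card T)"
      using that card_less[of S T] by auto
    then show ?thesis
      using that perturbed_valuation_insert[of S m x e] perturbed_valuation_insert[of T m x e]
        small[of S] small[of T] small[of "insert x S"] small[of "insert x T"]
      unfolding abs_le_iff by linarith
  qed
  then have submod: "?v (insert x T) - ?v T \<le> ?v (insert x S) - ?v S"
    if "S \<subseteq> T" "T \<subseteq> goods m" "x \<in> goods m" "x \<notin> T" for S T x
    using that by (cases "S = T") auto
  have outside: "?v S = 0" if "\<not> S \<subseteq> goods m" for S
    using that by (simp add: perturbed_valuation_def)
  have "monotone_valuation (goods m) ?v"
    unfolding monotone_valuation_def using empty mono[of "{}"] mono by auto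
  moreover have "submodular (goods m) ?v"
    unfolding submodular_def using submod by simp
  ultimately show ?thesis
    unfolding sub_valuation_oracle_def using outside by blast
qed

lemma card_le_Suc_of_EFX:
  fixes v :: "nat set \<Rightarrow> real"
  assumes v_less: "\<And>S T. S \<subseteq> goods m \<Longrightarrow> T \<subseteq> goods m \<Longrightarrow> card S < card T \<Longrightarrow> v S < v T"
    and "P \<subseteq> goods m" "Q \<subseteq> goods m"
    and EFX: "\<And>g. g \<in> Q \<Longrightarrow> v (Q - {g}) \<le> v P"
  shows "card Q \<le> Suc (card P)"
proof (rule ccontr)
  assume "\<not> card Q \<le> Suc (card P)"
  then have "Q \<noteq> {}" by auto
  then obtain g where g: "g \<in> Q" by blast
  have "finite Q" using finite_subset[OF assms(3)] by simp
  then have "card P < card (Q - {g})"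
    using g \<open>\<not> card Q \<le> Suc (card P)\<close> by simp
  then have "v P < v (Q - {g})"
    using assms(2,3) by (intro v_less) auto
  with EFX[OF g] show False by simp
qed

lemma card_disjoint_Un_goods:
  assumes "P \<union> Q = goods m" "P \<inter> Q = {}"
  shows "card P + card Q = m"
proof -
  have "finite (P \<union> Q)" using assms(1) by simp
  then have "card (P \<union> Q) = card P + card Q"
    using assms(2) by (simp add: card_Un_disjoint)
  then show ?thesis using assms(1) by simp
qed

lemma kneser_neighbour_is_complement_minus:
  assumes "P \<union> Q = goods (2 * k + 1)" "P \<inter> Q = {}" "card P = k"
    and "b \<in> kneser_vertices (2 * k + 1) k" "kneser_adj P b"
  shows "\<exists>g\<in>Q. b = Q - {g}"
proof -
  have "card Q = Suc k" using card_disjoint_Un_goods[OF assms(1,2)] assms(3) by simp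
  have "finite (P \<union> Q)" using assms(1) by simp
  then have "finite Q" by simp
  have "card b = k" "b \<subseteq> Q"
    using assms(1,4,5) by (auto simp: kneser_vertices_def kneser_adj_def goods_def)
  moreover have "b \<noteq> Q" using \<open>card b = k\<close> \<open>card Q = Suc k\<close> by auto
  ultimately obtain g where "g \<in> Q" "g \<notin> b" by blast
  then have "b = Q - {g}"
    using \<open>finite Q\<close> \<open>card b = k\<close> \<open>b \<subseteq> Q\<close> \<open>card Q = Suc k\<close>
      card_subset_eq[of "Q - {g}" b] by auto
  with \<open>g \<in> Q\<close> show ?thesis by blast
qed

definition kneser_perturbation :: "nat \<Rightarrow> (nat set \<Rightarrow> real) \<Rightarrow> nat set \<Rightarrow> real" where
  "kneser_perturbation k f S = (if card S = k then arctan (f S) / 4 else 0)"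

definition kneser_valuation :: "nat \<Rightarrow> (nat set \<Rightarrow> real) \<Rightarrow> nat set \<Rightarrow> real" where
  "kneser_valuation k f = perturbed_valuation (2 * k + 1) (kneser_perturbation k f)"

lemma abs_kneser_perturbation_le: "\<bar>kneser_perturbation k f S\<bar> \<le> 1/2"
proof -
  have "\<bar>arctan (f S)\<bar> \<le> 2"
    using arctan_bounded[of "f S"] pi_less_4 by linarith
  then show ?thesis by (simp add: kneser_perturbation_def)
qed

lemma sub_valuation_oracle_kneser_valuation:
  assumes "k \<ge> 1"
  shows "sub_valuation_oracle (2 * k + 1) (kneser_valuation k f)"
  unfolding kneser_valuation_def
  using assms abs_kneser_perturbation_le
  by (intro sub_valuation_oracle_perturbed_valuation) (auto simp: kneser_perturbation_def)

lemma kneser_valuation_of_vertex: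
  "S \<in> kneser_vertices (2 * k + 1) k \<Longrightarrow>
     kneser_valuation k f S = card_profile (2 * k + 1) k + arctan (f S) / 4"
  by (simp add: kneser_valuation_def perturbed_valuation_def kneser_perturbation_def
      kneser_vertices_def goods_def)

lemma is_local_max_of_EFX_bundle:
  assumes "k \<ge> 1" and partition: "P \<union> Q = goods (2 * k + 1)" "P \<inter> Q = {}"
    and "card P \<le> k"
    and EFX: "\<And>g. g \<in> Q \<Longrightarrow> kneser_valuation k f (Q - {g}) \<le> kneser_valuation k f P"
  shows "is_local_max (kneser_vertices (2 * k + 1) k) kneser_adj f P"
proof -
  have v_less: "kneser_valuation k f S < kneser_valuation k f T"
    if "S \<subseteq> goods (2 * k + 1)" "T \<subseteq> goods (2 * k + 1)" "card S < card T" for S T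
    unfolding kneser_valuation_def using that
    by (intro perturbed_valuation_less abs_kneser_perturbation_le)
  have "card Q \<le> Suc (card P)"
    using partition by (intro card_le_Suc_of_EFX[OF v_less _ _ EFX]) auto
  with card_disjoint_Un_goods[OF partition] \<open>card P \<le> k\<close>
  have "card P = k" by simp
  then have P: "P \<in> kneser_vertices (2 * k + 1) k"
    using partition by (auto simp: kneser_vertices_def goods_def)
  have "f b \<le> f P" if b: "b \<in> kneser_vertices (2 * k + 1) k" "kneser_adj P b" for b
  proof -
    obtain g where "g \<in> Q" "b = Q - {g}"
      using kneser_neighbour_is_complement_minus[OF partition \<open>card P = k\<close> b] by blast
    then have "kneser_valuation k f b \<le> kneser_valuation k f P"
      using EFX by blast
    then show ?thesis
      using kneser_valuation_of_vertex[OF b(1)] kneser_valuation_of_vertex[OF P]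
      by (simp add: arctan_le_iff)
  qed
  with P show ?thesis by (simp add: is_local_max_def)
qed

definition smaller_bundle :: "nat \<Rightarrow> (nat \<Rightarrow> nat set) \<Rightarrow> nat set" where
  "smaller_bundle k A = (if card (A 1) \<le> k then A 1 else A 2)"

lemma is_local_max_smaller_bundle:
  assumes "k \<ge> 1" "is_allocation 2 (goods (2 * k + 1)) A"
    and "EFX_id 2 (kneser_valuation k f) A"
  shows "is_local_max (kneser_vertices (2 * k + 1) k) kneser_adj f (smaller_bundle k A)"
proof -
  have players: "{1..2::nat} = {1, 2}" by auto
  have partition: "A 1 \<union> A 2 = goods (2 * k + 1)" "A 1 \<inter> A 2 = {}"
    using assms(2) unfolding is_allocation_def players by auto
  have EFX_12: "\<And>g. g \<in> A 2 \<Longrightarrow> kneser_valuation k f (A 2 - {g}) \<le> kneser_valuation k f (A 1)"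
    and EFX_21: "\<And>g. g \<in> A 1 \<Longrightarrow> kneser_valuation k f (A 1 - {g}) \<le> kneser_valuation k f (A 2)"
    using assms(3) unfolding EFX_id_def players by auto
  show ?thesis
  proof (cases "card (A 1) \<le> k")
    case True
    then show ?thesis
      using is_local_max_of_EFX_bundle[OF assms(1) partition True EFX_12]
      by (simp add: smaller_bundle_def)
  next
    case False
    then have "card (A 2) \<le> k"
      using card_disjoint_Un_goods[OF partition] by simp
    moreover have "A 2 \<union> A 1 = goods (2 * k + 1)" "A 2 \<inter> A 1 = {}"
      using partition by auto
    ultimately show ?thesis
      using is_local_max_of_EFX_bundle[OF assms(1) _ _ _ EFX_21] False
      by (simp add: smaller_bundle_def)
  qed
qed

definition kneser_query :: "nat \<Rightarrow> nat set \<Rightarrow> real + (nat set \<times> (real \<Rightarrow> real))" where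
  "kneser_query k S =
     (if S \<in> kneser_vertices (2 * k + 1) k
      then Inr (S, \<lambda>r. card_profile (2 * k + 1) k + arctan r / 4)
      else Inl (perturbed_valuation (2 * k + 1) (\<lambda>_. 0) S))"

lemma translated_oracle_kneser_query:
  "translated_oracle (kneser_query k) f = kneser_valuation k f"
proof
  fix S
  show "translated_oracle (kneser_query k) f S = kneser_valuation k f S"
  proof (cases "S \<in> kneser_vertices (2 * k + 1) k")
    case True
    then show ?thesis
      by (simp add: translated_oracle_def kneser_query_def kneser_valuation_of_vertex)
  next
    case False
    then have "S \<subseteq> goods (2 * k + 1) \<Longrightarrow> kneser_perturbation k f S = 0"
      by (simp add: kneser_vertices_def kneser_perturbation_def goods_def)
    with False show ?thesis
      by (simp add: translated_oracle_def kneser_query_def kneser_valuation_def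
          perturbed_valuation_def)
  qed
qed

theorem theorem3p1:
  fixes k :: nat
  assumes "k \<ge> 1"
  shows "D_sub_EFX_id 2 (2 * k + 1) \<ge> D_LS (kneser_vertices (2 * k + 1) k) kneser_adj"
  unfolding D_sub_EFX_id_def D_LS_def
proof (rule query_complexity_reduction[where tr = "kneser_query k" and out = "smaller_bundle k"])
  fix f :: "nat set \<Rightarrow> real"
  show "sub_valuation_oracle (2 * k + 1) (translated_oracle (kneser_query k) f)"
    using sub_valuation_oracle_kneser_valuation[OF assms]
    by (simp add: translated_oracle_kneser_query)
next
  fix f :: "nat set \<Rightarrow> real" and A :: "nat \<Rightarrow> nat set"
  assume "is_allocation 2 (goods (2 * k + 1)) A \<and> EFX_id 2 (translated_oracle (kneser_query k) f) A"
  then show "is_local_max (kneser_vertices (2 * k + 1) k) kneser_adj f (smaller_bundle k A)"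
    using is_local_max_smaller_bundle[OF assms] by (simp add: translated_oracle_kneser_query)
qed

end
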